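(* If $X$ satisfies $selSS^*_{cd}(\mathcal{O},\Gamma)$, has countable extent, and $|X|<\mathfrak{b}$, then $X$ is selectively strongly star-Hurewicz.
   Context: All spaces are regular. $St(A,\mathcal{U})=\bigcup\{U\in\mathcal{U}:U\cap A\neq\emptyset\}$. $\mathfrak{b}$ is the bounding number. $X$ has countable extent if every closed discrete subset of $X$ is countable. $selSS^*_{cd}(\mathcal{O},\Gamma)$: for every sequence $(\mathcal{U}_n:n\in\omega)$ of open covers and every sequence $(D_n:n\in\omega)$ of dense subsets of $X$ there are sets $C_n\subseteq D_n$, closed and discrete in $X$, such that every $x\in X$ lies in $St(C_n,\mathcal{U}_n)$ for all but finitely many $n$. $X$ is selectively strongly star-Hurewicz if for every sequence $(\mathcal{U}_n)$ of open covers and every sequence $(D_n)$ of dense subsets there are finite $F_n\subseteq D_n$ such that every $x\in X$ lies in $St(F_n,\mathcal{U}_n)$ for all but finitely many $n$. *)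

theory Defs
  imports "HOL-Analysis.Analysis"
begin

definition star :: "'a set \<Rightarrow> 'a set set \<Rightarrow> 'a set" where
  "star A \<U> = \<Union>{U \<in> \<U>. U \<inter> A \<noteq> {}}"

definition open_cover :: "'a topology \<Rightarrow> 'a set set \<Rightarrow> bool" where
  "open_cover X \<U> \<longleftrightarrow> (\<forall>U\<in>\<U>. openin X U) \<and> \<Union>\<U> = topspace X"

definition dense_in :: "'a topology \<Rightarrow> 'a set \<Rightarrow> bool" where
  "dense_in X D \<longleftrightarrow> D \<subseteq> topspace X \<and> X closure_of D = topspace X"

definition closed_discrete :: "'a topology \<Rightarrow> 'a set \<Rightarrow> bool" where
  "closed_discrete X C \<longleftrightarrow> closedin X C \<and> subtopology X C = discrete_topology C"

definition countable_extent :: "'a topology \<Rightarrow> bool" where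
  "countable_extent X \<longleftrightarrow> (\<forall>C. closed_discrete X C \<longrightarrow> countable C)"

definition selSS_cd_O_Gamma :: "'a topology \<Rightarrow> bool" where
  "selSS_cd_O_Gamma X \<longleftrightarrow>
    (\<forall>\<U> D. (\<forall>n. open_cover X (\<U> n)) \<and> (\<forall>n. dense_in X (D n)) \<longrightarrow>
      (\<exists>C. (\<forall>n. C n \<subseteq> D n \<and> closed_discrete X (C n)) \<and>
           (\<forall>x\<in>topspace X. \<forall>\<^sub>F n in sequentially. x \<in> star (C n) (\<U> n))))"

definition sel_strongly_star_Hurewicz :: "'a topology \<Rightarrow> bool" where
  "sel_strongly_star_Hurewicz X \<longleftrightarrow>
    (\<forall>\<U> D. (\<forall>n. open_cover X (\<U> n)) \<and> (\<forall>n. dense_in X (D n)) \<longrightarrow>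
      (\<exists>F. (\<forall>n. F n \<subseteq> D n \<and> finite (F n)) \<and>
           (\<forall>x\<in>topspace X. \<forall>\<^sub>F n in sequentially. x \<in> star (F n) (\<U> n))))"

definition dominated_ae :: "(nat \<Rightarrow> nat) \<Rightarrow> (nat \<Rightarrow> nat) \<Rightarrow> bool" where
  "dominated_ae f g \<longleftrightarrow> (\<forall>\<^sub>F n in sequentially. f n \<le> g n)"

definition unbounded_family :: "(nat \<Rightarrow> nat) set \<Rightarrow> bool" where
  "unbounded_family F \<longleftrightarrow> \<not> (\<exists>g. \<forall>f\<in>F. dominated_ae f g)"

text \<open>|A| < b : A has cardinality strictly smaller than every unbounded family.\<close>
definition card_less_b :: "'a set \<Rightarrow> bool" where
  "card_less_b A \<longleftrightarrow> (\<forall>F. unbounded_family F \<longrightarrow> (card_of A, card_of F) \<in> ordLess)"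

end

theory Submission
  imports Defs
begin

text \<open>Take closed discrete selectors \<open>C\<^sub>n \<subseteq> D\<^sub>n\<close>; by countable extent they are countable,
  so enumerate them. Each point \<open>x\<close> then determines the function sending \<open>n\<close> to the index
  of some element of \<open>C\<^sub>n\<close> sharing a member of \<open>\<U>\<^sub>n\<close> with \<open>x\<close>. Fewer than \<open>\<bbbb>\<close> such functions
  are eventually dominated by one \<open>g\<close>, and the first \<open>g(n) + 1\<close> elements of \<open>C\<^sub>n\<close> are the
  required finite selectors.\<close>

lemma card_less_b_bounded:
  fixes f :: "'a \<Rightarrow> nat \<Rightarrow> nat"
  assumes "card_less_b A"
  obtains g where "\<And>x. x \<in> A \<Longrightarrow> dominated_ae (f x) g"
proof -
  have "\<not> unbounded_family (f ` A)"
  proof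
    assume "unbounded_family (f ` A)"
    then have "(card_of A, card_of (f ` A)) \<in> ordLess"
      using assms unfolding card_less_b_def by blast
    moreover have "(card_of (f ` A), card_of A) \<in> ordLeq"
      by (rule card_of_image)
    ultimately show False
      using not_ordLess_ordLeq by metis
  qed
  then show thesis
    using that unfolding unbounded_family_def by blast
qed

lemma star_mono: "A \<subseteq> B \<Longrightarrow> star A \<U> \<subseteq> star B \<U>"
  unfolding star_def by blast

definition initial_segment :: "'a set \<Rightarrow> nat \<Rightarrow> 'a set" where
  "initial_segment C k = {c \<in> C. to_nat_on C c \<le> k}"

lemma initial_segment_subset: "initial_segment C k \<subseteq> C"
  unfolding initial_segment_def by blast

lemma initial_segment_mono: "k \<le> l \<Longrightarrow> initial_segment C k \<subseteq> initial_segment C l"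
  unfolding initial_segment_def by auto

lemma finite_initial_segment:
  assumes "countable C"
  shows "finite (initial_segment C k)"
proof -
  have "inj_on (to_nat_on C) (initial_segment C k)"
    using inj_on_to_nat_on[OF assms] initial_segment_subset by (rule inj_on_subset)
  moreover have "to_nat_on C ` initial_segment C k \<subseteq> {..k}"
    unfolding initial_segment_def by auto
  ultimately show ?thesis
    by (metis finite_atMost finite_imageD finite_subset)
qed

lemma star_initial_segment:
  assumes "x \<in> star C \<U>"
  shows "\<exists>k. x \<in> star (initial_segment C k) \<U>"
proof -
  from assms obtain U c where "U \<in> \<U>" "x \<in> U" "c \<in> U" "c \<in> C"
    unfolding star_def by blast
  then have "x \<in> star (initial_segment C (to_nat_on C c)) \<U>"
    unfolding star_def initial_segment_def by blast
  then show ?thesis ..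
qed

lemma eventually_star_finite_selection:
  assumes "card_less_b A"
    and "\<And>n. countable (C n)"
    and "\<And>x. x \<in> A \<Longrightarrow> \<forall>\<^sub>F n in sequentially. x \<in> star (C n) (\<U> n)"
  obtains F where "\<And>n. F n \<subseteq> C n" "\<And>n. finite (F n)"
    and "\<And>x. x \<in> A \<Longrightarrow> \<forall>\<^sub>F n in sequentially. x \<in> star (F n) (\<U> n)"
proof -
  define f where "f x n = (SOME k. x \<in> star (initial_segment (C n) k) (\<U> n))" for x n
  have f: "x \<in> star (initial_segment (C n) (f x n)) (\<U> n)" if "x \<in> star (C n) (\<U> n)" for x n
    unfolding f_def using star_initial_segment[OF that] by (rule someI_ex)
  obtain g where g: "\<And>x. x \<in> A \<Longrightarrow> dominated_ae (f x) g"
    using card_less_b_bounded[OF assms(1), where f = f] by blast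
  show thesis
  proof (rule that[of "\<lambda>n. initial_segment (C n) (g n)"])
    show "initial_segment (C n) (g n) \<subseteq> C n" "finite (initial_segment (C n) (g n))" for n
      using initial_segment_subset finite_initial_segment[OF assms(2)] .
  next
    fix x assume x: "x \<in> A"
    have "\<forall>\<^sub>F n in sequentially. x \<in> star (C n) (\<U> n) \<and> f x n \<le> g n"
      using assms(3)[OF x] g[OF x] unfolding dominated_ae_def by (rule eventually_conj)
    then show "\<forall>\<^sub>F n in sequentially. x \<in> star (initial_segment (C n) (g n)) (\<U> n)"
    proof (rule eventually_mono)
      fix n assume "x \<in> star (C n) (\<U> n) \<and> f x n \<le> g n"
      then show "x \<in> star (initial_segment (C n) (g n)) (\<U> n)"
        using f star_mono[OF initial_segment_mono] by (meson subsetD)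
    qed
  qed
qed

text \<open>Regularity is a standing assumption of the paper; the argument does not use it.\<close>

theorem mainTheorem12:
  fixes X :: "'a topology"
  assumes "regular_space X"
    and "selSS_cd_O_Gamma X"
    and "countable_extent X"
    and "card_less_b (topspace X)"
  shows "sel_strongly_star_Hurewicz X"
  unfolding sel_strongly_star_Hurewicz_def
proof (intro allI impI)
  fix \<U> :: "nat \<Rightarrow> 'a set set" and D :: "nat \<Rightarrow> 'a set"
  assume "(\<forall>n. open_cover X (\<U> n)) \<and> (\<forall>n. dense_in X (D n))"
  then obtain C where C: "\<And>n. C n \<subseteq> D n" "\<And>n. closed_discrete X (C n)"
    and star_C: "\<And>x. x \<in> topspace X \<Longrightarrow> \<forall>\<^sub>F n in sequentially. x \<in> star (C n) (\<U> n)"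
    using assms(2) unfolding selSS_cd_O_Gamma_def by (elim allE[of _ \<U>] allE[of _ D]) blast
  have "\<And>n. countable (C n)"
    using C(2) assms(3) unfolding countable_extent_def by blast
  then obtain F where F: "\<And>n. F n \<subseteq> C n" "\<And>n. finite (F n)"
    and "\<And>x. x \<in> topspace X \<Longrightarrow> \<forall>\<^sub>F n in sequentially. x \<in> star (F n) (\<U> n)"
    using eventually_star_finite_selection[OF assms(4) _ star_C] by blast
  moreover have "\<And>n. F n \<subseteq> D n"
    using F(1) C(1) by (rule subset_trans)
  ultimately show "\<exists>F. (\<forall>n. F n \<subseteq> D n \<and> finite (F n)) \<and>
      (\<forall>x\<in>topspace X. \<forall>\<^sub>F n in sequentially. x \<in> star (F n) (\<U> n))"
    by blast
qed

end
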